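(* Let $p$ be a prime number and $(t,R_1,R_2)\in\mathcal{F}$. The map $F_{t,R_1,R_2}=(J,H):\mathrm{S}^2_p\times\mathrm{S}^2_p\to\mathbb{Q}_p^2$, $J=R_1z_1+R_2z_2$, $H=(1-t)z_1+t(x_1x_2+y_1y_2+z_1z_2)$, has exactly four rank $0$ critical points, namely $P=(0,0,1,0,0,1)$, $Q=(0,0,-1,0,0,1)$, $S=(0,0,1,0,0,-1)$, $T=(0,0,-1,0,0,-1)$.
   Context: $\mathrm{S}^2_p=\{(x,y,z)\in\mathbb{Q}_p^3:x^2+y^2+z^2=1\}$ is the $p$-adic sphere (a $p$-adic analytic manifold of dimension $2$), and $(x_1,y_1,z_1,x_2,y_2,z_2)$ are the coordinates on $\mathrm{S}^2_p\times\mathrm{S}^2_p$. $\mathcal{F}=\{(t,R_1,R_2)\in\mathbb{Z}_p\times\mathbb{Q}_p^2:|R_2|_p>|R_1|_p>0\}$. A rank $0$ critical point is a point $m$ with $dJ_m=dH_m=0$. *)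

theory Defs
  imports "HOL-Analysis.Analysis" "HOL-Computational_Algebra.Primes"
begin

definition padic_val_rat :: "nat \<Rightarrow> rat \<Rightarrow> int" where
  "padic_val_rat p q = (case quotient_of q of (a, b) \<Rightarrow>
      int (multiplicity (int p) a) - int (multiplicity (int p) b))"

definition padic_abs_rat :: "nat \<Rightarrow> rat \<Rightarrow> real" where
  "padic_abs_rat p q = (if q = 0 then 0 else real p powr (- real_of_int (padic_val_rat p q)))"

text \<open>This characterises Q_p up to isometric isomorphism.\<close>

definition is_Qp :: "nat \<Rightarrow> ('a::field_char_0 \<Rightarrow> real) \<Rightarrow> bool" where
  "is_Qp p N \<longleftrightarrow>
     (\<forall>x. N x = 0 \<longleftrightarrow> x = 0) \<and>
     (\<forall>x. 0 \<le> N x) \<and>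
     (\<forall>x y. N (x * y) = N x * N y) \<and>
     (\<forall>x y. N (x + y) \<le> max (N x) (N y)) \<and>
     (\<forall>q. N (of_rat q) = padic_abs_rat p q) \<and>
     (\<forall>x e. e > 0 \<longrightarrow> (\<exists>q. N (x - of_rat q) < e)) \<and>
     (\<forall>X :: nat \<Rightarrow> 'a. (\<forall>e>0. \<exists>M. \<forall>m\<ge>M. \<forall>n\<ge>M. N (X m - X n) < e)
          \<longrightarrow> (\<exists>l. \<forall>e>0. \<exists>M. \<forall>n\<ge>M. N (X n - l) < e))"

definition Zp :: "('a \<Rightarrow> real) \<Rightarrow> 'a set" where
  "Zp N = {x. N x \<le> 1}"

definition vnorm :: "('a \<Rightarrow> real) \<Rightarrow> 'a ^ 'n::finite \<Rightarrow> real" where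
  "vnorm N v = Max (range (\<lambda>i. N (v $ i)))"

definition has_vderiv ::
  "('a::field \<Rightarrow> real) \<Rightarrow> ('a ^ 'n::finite \<Rightarrow> 'a) \<Rightarrow> ('a ^ 'n \<Rightarrow> 'a) \<Rightarrow> 'a ^ 'n \<Rightarrow> bool" where
  "has_vderiv N f L m \<longleftrightarrow>
     (\<forall>u v. L (u + v) = L u + L v) \<and> (\<forall>c v. L (c *s v) = c * L v) \<and>
     (\<forall>e>0. \<exists>d>0. \<forall>v. vnorm N v < d \<longrightarrow> N (f (m + v) - f m - L v) \<le> e * vnorm N v)"

text \<open>Coordinates: m = (x1,y1,z1,x2,y2,z2) = (m$0, m$1, m$2, m$3, m$4, m$5).\<close>

definition sph1 :: "'a::field ^ 6 \<Rightarrow> 'a" where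
  "sph1 m = (m$0)^2 + (m$1)^2 + (m$2)^2 - 1"
definition sph2 :: "'a::field ^ 6 \<Rightarrow> 'a" where
  "sph2 m = (m$3)^2 + (m$4)^2 + (m$5)^2 - 1"

definition SS :: "('a::field ^ 6) set" where
  "SS = {m. sph1 m = 0 \<and> sph2 m = 0}"

definition tangent_SS :: "('a::field \<Rightarrow> real) \<Rightarrow> 'a ^ 6 \<Rightarrow> ('a ^ 6) set" where
  "tangent_SS N m = {v. (\<forall>L. has_vderiv N sph1 L m \<longrightarrow> L v = 0) \<and>
                        (\<forall>L. has_vderiv N sph2 L m \<longrightarrow> L v = 0)}"

text \<open>d f_m = 0 for the restriction of f to SS: the differential of f at m vanishes on the tangent space.\<close>
definition dvanishes :: "('a::field \<Rightarrow> real) \<Rightarrow> ('a ^ 6 \<Rightarrow> 'a) \<Rightarrow> 'a ^ 6 \<Rightarrow> bool" where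
  "dvanishes N f m \<longleftrightarrow> (\<exists>L. has_vderiv N f L m \<and> (\<forall>v\<in>tangent_SS N m. L v = 0))"

definition Jfun :: "'a::field \<Rightarrow> 'a \<Rightarrow> 'a ^ 6 \<Rightarrow> 'a" where
  "Jfun R1 R2 m = R1 * m$2 + R2 * m$5"

definition Hfun :: "'a::field \<Rightarrow> 'a ^ 6 \<Rightarrow> 'a" where
  "Hfun t m = (1 - t) * m$2 + t * (m$0 * m$3 + m$1 * m$4 + m$2 * m$5)"

definition rank0_critical :: "('a::field \<Rightarrow> real) \<Rightarrow> 'a \<Rightarrow> 'a \<Rightarrow> 'a \<Rightarrow> ('a ^ 6) set" where
  "rank0_critical N t R1 R2 =
     {m \<in> SS. dvanishes N (Jfun R1 R2) m \<and> dvanishes N (Hfun t) m}"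

definition coords6 :: "'a ^ 6 \<Rightarrow> 'a \<times> 'a \<times> 'a \<times> 'a \<times> 'a \<times> 'a" where
  "coords6 m = (m$0, m$1, m$2, m$3, m$4, m$5)"

end

theory Submission
  imports Defs
begin

text \<open>
  Since Q_p has nonzero elements of arbitrarily small absolute value, differentials are unique,
  so the tangent space of S^2_p \<times> S^2_p at m is the pair of orthogonal complements of the two
  unit vectors. Rotating one factor in its xz- or yz-plane is tangent and changes J at rate
  -R_i x_i resp. -R_i y_i, so dJ_m = 0 forces x_1 = y_1 = x_2 = y_2 = 0, i.e. both factors sit
  at the poles (0, 0, \<plusminus>1). There every tangent vector has dz_1 = dz_2 = 0, which kills dJ and,
  as x and y vanish, also dH.
\<close>

lemma vec_nth_le_vnorm: "N (v $ i) \<le> vnorm N v"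
  unfolding vnorm_def by (rule Max_ge) auto

lemma has_vderiv_scale:
  "has_vderiv N f L m \<Longrightarrow> L (c *s v) = c * L v"
  unfolding has_vderiv_def by blast

lemma has_vderiv_remainderE:
  assumes "has_vderiv N f L m" and "e > 0"
  obtains d where "d > 0" "\<And>v. vnorm N v < d \<Longrightarrow> N (f (m + v) - f m - L v) \<le> e * vnorm N v"
  using assms unfolding has_vderiv_def by blast

locale nonarch_abs =
  fixes N :: "'a::field \<Rightarrow> real"
  assumes N_eq_0_iff [simp]: "N x = 0 \<longleftrightarrow> x = 0"
    and N_nonneg [simp]: "0 \<le> N x"
    and N_mult: "N (x * y) = N x * N y"
    and N_add_le_max: "N (x + y) \<le> max (N x) (N y)"
begin

lemma N_zero [simp]: "N 0 = 0"
  by simp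

lemma N_one [simp]: "N 1 = 1"
  using N_mult[of 1 1] by simp

lemma N_power: "N (x ^ k) = N x ^ k"
  by (induction k) (simp_all add: N_mult)

lemma N_minus [simp]: "N (- x) = N x"
proof -
  have "N (- 1) ^ 2 = 1"
    using N_power[of "- 1" 2] by simp
  then have "N (- 1) = 1"
    using N_nonneg[of "- 1"] by (auto simp: power2_eq_1_iff)
  then show ?thesis
    using N_mult[of "- 1" x] by simp
qed

lemma N_diff_le_max: "N (x - y) \<le> max (N x) (N y)"
  using N_add_le_max[of x "- y"] by simp

lemma vnorm_nonneg [simp]: "0 \<le> vnorm N v"
  using vec_nth_le_vnorm[of N v] N_nonneg order_trans by blast

lemma vnorm_scale_le: "vnorm N (c *s v) \<le> N c * vnorm N v"
  unfolding vnorm_def[of N "c *s v"]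
proof (rule Max.boundedI)
  fix a assume "a \<in> range (\<lambda>i. N ((c *s v) $ i))"
  then obtain i where "a = N (c * v $ i)" by auto
  then show "a \<le> N c * vnorm N v"
    by (simp add: N_mult vec_nth_le_vnorm mult_left_mono)
qed auto

lemma N_sum3_products_le:
  "N (v$i * v$j + v$k * v$l + v$r * v$s) \<le> vnorm N v ^ 2"
proof -
  have prod: "N (v$a * v$b) \<le> vnorm N v ^ 2" for a b
    unfolding N_mult power2_eq_square
    by (intro mult_mono vec_nth_le_vnorm) simp_all
  show ?thesis
    using N_add_le_max[of "v$i * v$j + v$k * v$l" "v$r * v$s"]
      N_add_le_max[of "v$i * v$j" "v$k * v$l"] prod[of i j] prod[of k l] prod[of r s]
    by linarith
qed

lemma has_vderiv_quadratic_remainder: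
  fixes m :: "'a ^ 'n::finite"
  assumes "\<And>u w. L (u + w) = L u + L w" and "\<And>c w. L (c *s w) = c * L w"
    and remainder: "\<And>v. N (f (m + v) - f m - L v) \<le> C * vnorm N v ^ 2"
  shows "has_vderiv N f L m"
proof -
  have "\<exists>d>0. \<forall>v::'a ^ 'n. vnorm N v < d \<longrightarrow> N (f (m + v) - f m - L v) \<le> e * vnorm N v"
    if "e > 0" for e
  proof (intro exI conjI allI impI)
    show "e / (\<bar>C\<bar> + 1) > 0" using \<open>e > 0\<close> by simp
    fix v :: "'a ^ 'n" assume small: "vnorm N v < e / (\<bar>C\<bar> + 1)"
    have "N (f (m + v) - f m - L v) \<le> \<bar>C\<bar> * vnorm N v * vnorm N v"
      using remainder[of v] mult_right_mono[OF abs_ge_self[of C], of "vnorm N v ^ 2"]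
      by (simp add: power2_eq_square mult.assoc)
    also have "\<dots> \<le> \<bar>C\<bar> * (e / (\<bar>C\<bar> + 1)) * vnorm N v"
      using small by (intro mult_right_mono mult_left_mono) simp_all
    also have "\<dots> \<le> e * vnorm N v"
    proof (intro mult_right_mono)
      have "\<bar>C\<bar> / (\<bar>C\<bar> + 1) \<le> 1" by simp
      then show "\<bar>C\<bar> * (e / (\<bar>C\<bar> + 1)) \<le> e"
        using mult_right_mono[of "\<bar>C\<bar> / (\<bar>C\<bar> + 1)" 1 e] \<open>e > 0\<close> by simp
    qed simp
    finally show "N (f (m + v) - f m - L v) \<le> e * vnorm N v" .
  qed
  with assms(1,2) show ?thesis
    unfolding has_vderiv_def by blast
qed

lemma has_vderiv_sph1: "has_vderiv N sph1 (\<lambda>v. 2 * (m$0 * v$0 + m$1 * v$1 + m$2 * v$2)) m"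
proof (rule has_vderiv_quadratic_remainder[where C = 1])
  fix v :: "'a ^ 6"
  have "sph1 (m + v) - sph1 m - 2 * (m$0 * v$0 + m$1 * v$1 + m$2 * v$2)
      = v$0 * v$0 + v$1 * v$1 + v$2 * v$2"
    unfolding sph1_def by (simp add: algebra_simps power2_eq_square)
  then show "N (sph1 (m + v) - sph1 m - 2 * (m$0 * v$0 + m$1 * v$1 + m$2 * v$2))
      \<le> 1 * vnorm N v ^ 2"
    using N_sum3_products_le by simp
qed (simp_all add: algebra_simps)

lemma has_vderiv_sph2: "has_vderiv N sph2 (\<lambda>v. 2 * (m$3 * v$3 + m$4 * v$4 + m$5 * v$5)) m"
proof (rule has_vderiv_quadratic_remainder[where C = 1])
  fix v :: "'a ^ 6"
  have "sph2 (m + v) - sph2 m - 2 * (m$3 * v$3 + m$4 * v$4 + m$5 * v$5)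
      = v$3 * v$3 + v$4 * v$4 + v$5 * v$5"
    unfolding sph2_def by (simp add: algebra_simps power2_eq_square)
  then show "N (sph2 (m + v) - sph2 m - 2 * (m$3 * v$3 + m$4 * v$4 + m$5 * v$5))
      \<le> 1 * vnorm N v ^ 2"
    using N_sum3_products_le by simp
qed (simp_all add: algebra_simps)

lemma has_vderiv_Jfun: "has_vderiv N (Jfun R1 R2) (\<lambda>v. R1 * v$2 + R2 * v$5) m"
  by (rule has_vderiv_quadratic_remainder[where C = 0]) (simp_all add: Jfun_def algebra_simps)

lemma has_vderiv_Hfun:
  "has_vderiv N (Hfun t)
     (\<lambda>v. (1 - t) * v$2 + t * (m$0 * v$3 + v$0 * m$3 + m$1 * v$4 + v$1 * m$4 + m$2 * v$5 + v$2 * m$5)) m"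
proof (rule has_vderiv_quadratic_remainder[where C = "N t"])
  fix v :: "'a ^ 6"
  have "Hfun t (m + v) - Hfun t m
        - ((1 - t) * v$2 + t * (m$0 * v$3 + v$0 * m$3 + m$1 * v$4 + v$1 * m$4 + m$2 * v$5 + v$2 * m$5))
      = t * (v$0 * v$3 + v$1 * v$4 + v$2 * v$5)"
    unfolding Hfun_def by (simp add: algebra_simps)
  then show "N (Hfun t (m + v) - Hfun t m
        - ((1 - t) * v$2 + t * (m$0 * v$3 + v$0 * m$3 + m$1 * v$4 + v$1 * m$4 + m$2 * v$5 + v$2 * m$5)))
      \<le> N t * vnorm N v ^ 2"
    using N_sum3_products_le[of v 0 3 1 4 2 5] by (simp add: N_mult mult_left_mono)
qed (simp_all add: algebra_simps)

end

locale nontrivial_nonarch_abs = nonarch_abs +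
  assumes exists_N_less_1: "\<exists>c. c \<noteq> 0 \<and> N c < 1"
begin

lemma exists_nonzero_N_less:
  assumes "d > 0"
  shows "\<exists>c. c \<noteq> 0 \<and> N c < d"
proof -
  obtain c where "c \<noteq> 0" "N c < 1"
    using exists_N_less_1 by blast
  moreover obtain k where "N c ^ k < d"
    using real_arch_pow_inv[OF assms \<open>N c < 1\<close>] by blast
  ultimately show ?thesis
    using N_power power_not_zero by metis
qed

lemma N_vderiv_diff_le:
  assumes L: "has_vderiv N f L m" and L': "has_vderiv N f L' m" and "e > 0"
  shows "N (L v - L' v) \<le> e * vnorm N v"
proof -
  obtain d1 where "d1 > 0"
    and rem_L: "\<And>w. vnorm N w < d1 \<Longrightarrow> N (f (m + w) - f m - L w) \<le> e * vnorm N w"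
    using has_vderiv_remainderE[OF L \<open>e > 0\<close>] by blast
  obtain d2 where "d2 > 0"
    and rem_L': "\<And>w. vnorm N w < d2 \<Longrightarrow> N (f (m + w) - f m - L' w) \<le> e * vnorm N w"
    using has_vderiv_remainderE[OF L' \<open>e > 0\<close>] by blast
  have "min d1 d2 / (vnorm N v + 1) > 0"
    using \<open>d1 > 0\<close> \<open>d2 > 0\<close> by (simp add: add_nonneg_pos)
  then obtain c where "c \<noteq> 0" and c_small: "N c < min d1 d2 / (vnorm N v + 1)"
    using exists_nonzero_N_less by blast
  then have "N c > 0"
    using N_nonneg[of c] N_eq_0_iff[of c] by linarith
  have "vnorm N (c *s v) \<le> N c * (vnorm N v + 1)"
    using vnorm_scale_le[of c v] mult_left_mono[of "vnorm N v" "vnorm N v + 1" "N c"] by simp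
  also have "\<dots> < min d1 d2"
    using c_small by (simp add: pos_less_divide_eq add_nonneg_pos)
  finally have small: "vnorm N (c *s v) < d1" "vnorm N (c *s v) < d2"
    by simp_all
  define X where "X = f (m + c *s v) - f m"
  have "N c * N (L v - L' v) = N ((X - L' (c *s v)) - (X - L (c *s v)))"
    by (simp add: has_vderiv_scale[OF L] has_vderiv_scale[OF L'] right_diff_distrib N_mult[symmetric])
  also have "\<dots> \<le> e * vnorm N (c *s v)"
    using N_diff_le_max rem_L[OF small(1)] rem_L'[OF small(2)] unfolding X_def
    by (meson max.bounded_iff order_trans)
  also have "\<dots> \<le> N c * (e * vnorm N v)"
    using mult_left_mono[OF vnorm_scale_le[of c v], of e] \<open>e > 0\<close> by (simp add: ac_simps)
  finally show ?thesis
    using \<open>N c > 0\<close> by simp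
qed

lemma has_vderiv_unique:
  assumes "has_vderiv N f L m" and "has_vderiv N f L' m"
  shows "L = L'"
proof
  fix v
  have "N (L v - L' v) \<le> 0"
  proof (rule field_le_epsilon)
    fix e :: real assume "e > 0"
    have "vnorm N v / (vnorm N v + 1) \<le> 1"
      using vnorm_nonneg[of v] by (simp add: divide_le_eq_1_pos add_nonneg_pos)
    then have "e / (vnorm N v + 1) * vnorm N v \<le> e"
      using mult_left_mono[of "vnorm N v / (vnorm N v + 1)" 1 e] \<open>e > 0\<close> by simp
    then show "N (L v - L' v) \<le> 0 + e"
      using N_vderiv_diff_le[OF assms, of "e / (vnorm N v + 1)" v] \<open>e > 0\<close>
      by (simp add: add_nonneg_pos)
  qed
  then show "L v = L' v"
    using N_nonneg[of "L v - L' v"] by simp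
qed

lemma dvanishes_iff:
  assumes "has_vderiv N f L m"
  shows "dvanishes N f m \<longleftrightarrow> (\<forall>v\<in>tangent_SS N m. L v = 0)"
  using assms has_vderiv_unique unfolding dvanishes_def by blast

end

lemma is_Qp_nonarch_abs:
  assumes "is_Qp p N"
  shows "nonarch_abs N"
  using assms unfolding is_Qp_def by unfold_locales auto

lemma is_Qp_nontrivial_nonarch_abs:
  assumes "prime p" and "is_Qp p N"
  shows "nontrivial_nonarch_abs N"
proof -
  interpret nonarch_abs N
    using is_Qp_nonarch_abs[OF assms(2)] .
  have "quotient_of (of_nat p) = (int p, 1)"
    using quotient_of_rat_of_int[of "int p"] by simp
  then have "padic_val_rat p (of_nat p) = 1"
    unfolding padic_val_rat_def using assms(1) by (simp add: multiplicity_self)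
  moreover have "N (of_nat p) = padic_abs_rat p (of_nat p)"
    using assms(2) of_rat_of_nat_eq unfolding is_Qp_def by metis
  ultimately have "N (of_nat p) = inverse (real p)"
    using prime_gt_0_nat[OF assms(1)] by (simp add: padic_abs_rat_def powr_minus)
  then have "(of_nat p :: 'a) \<noteq> 0 \<and> N (of_nat p) < 1"
    using prime_gt_1_nat[OF assms(1)] by (simp add: inverse_less_1_iff)
  then show ?thesis
    by unfold_locales blast
qed

lemma tangent_SS_eq:
  fixes N :: "'a::field_char_0 \<Rightarrow> real"
  assumes "nontrivial_nonarch_abs N"
  shows "tangent_SS N m =
    {v. m$0 * v$0 + m$1 * v$1 + m$2 * v$2 = 0 \<and> m$3 * v$3 + m$4 * v$4 + m$5 * v$5 = 0}"
proof -
  interpret nontrivial_nonarch_abs N by fact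
  have kernel_iff: "(\<forall>L. has_vderiv N f L m \<longrightarrow> L v = 0) \<longleftrightarrow> L0 v = 0"
    if "has_vderiv N f L0 m" for f L0 and v :: "'a ^ 6"
    using that has_vderiv_unique by blast
  show ?thesis
    unfolding tangent_SS_def kernel_iff[OF has_vderiv_sph1] kernel_iff[OF has_vderiv_sph2] mult_eq_0_iff
    by simp
qed

definition SS_poles :: "('a::field ^ 6) set" where
  "SS_poles = {m \<in> SS. m$0 = 0 \<and> m$1 = 0 \<and> m$3 = 0 \<and> m$4 = 0}"

lemma tangent_SS_at_poles:
  fixes N :: "'a::field_char_0 \<Rightarrow> real"
  assumes "nontrivial_nonarch_abs N" and "m \<in> SS_poles" and "v \<in> tangent_SS N m"
  shows "v$2 = 0" and "v$5 = 0"
proof -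
  have "(m$2)^2 = 1" "(m$5)^2 = 1" and "m$2 * v$2 = 0" "m$5 * v$5 = 0"
    using assms unfolding tangent_SS_eq[OF assms(1)] SS_poles_def SS_def sph1_def sph2_def by auto
  then show "v$2 = 0" "v$5 = 0"
    by (auto simp: power2_eq_1_iff)
qed

lemma dvanishes_Jfun_iff:
  fixes N :: "'a::field_char_0 \<Rightarrow> real"
  assumes "nontrivial_nonarch_abs N" and "R1 \<noteq> 0" and "R2 \<noteq> 0" and "m \<in> SS"
  shows "dvanishes N (Jfun R1 R2) m \<longleftrightarrow> m \<in> SS_poles"
proof
  interpret nontrivial_nonarch_abs N by fact
  assume "dvanishes N (Jfun R1 R2) m"
  then have dJ: "R1 * v$2 + R2 * v$5 = 0" if "v \<in> tangent_SS N m" for v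
    using that unfolding dvanishes_iff[OF has_vderiv_Jfun] by blast
  \<comment> \<open>rotation of one factor in the plane of the coordinates i and j\<close>
  define rot :: "6 \<Rightarrow> 6 \<Rightarrow> 'a ^ 6" where
    "rot i j = (\<chi> k. if k = i then m$j else if k = j then - m$i else 0)" for i j
  have rot_tangent: "rot i j \<in> tangent_SS N m" if "(i, j) \<in> {(0, 2), (1, 2), (3, 5), (4, 5)}" for i j
    using that unfolding tangent_SS_eq[OF assms(1)] rot_def by (auto simp: algebra_simps)
  have "R1 * m$0 = 0" "R1 * m$1 = 0" "R2 * m$3 = 0" "R2 * m$4 = 0"
    using dJ[OF rot_tangent[of 0 2]] dJ[OF rot_tangent[of 1 2]]
      dJ[OF rot_tangent[of 3 5]] dJ[OF rot_tangent[of 4 5]]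
    by (simp_all add: rot_def)
  then show "m \<in> SS_poles"
    using assms(2-4) unfolding SS_poles_def by simp
next
  interpret nontrivial_nonarch_abs N by fact
  assume "m \<in> SS_poles"
  then show "dvanishes N (Jfun R1 R2) m"
    unfolding dvanishes_iff[OF has_vderiv_Jfun] using tangent_SS_at_poles[OF assms(1)] by simp
qed

lemma dvanishes_Hfun_at_poles:
  fixes N :: "'a::field_char_0 \<Rightarrow> real"
  assumes "nontrivial_nonarch_abs N" and "m \<in> SS_poles"
  shows "dvanishes N (Hfun t) m"
proof -
  interpret nontrivial_nonarch_abs N by fact
  show ?thesis
    unfolding dvanishes_iff[OF has_vderiv_Hfun] using assms(2) tangent_SS_at_poles[OF assms]
    by (simp add: SS_poles_def)
qed

lemma rank0_critical_eq_SS_poles: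
  fixes N :: "'a::field_char_0 \<Rightarrow> real"
  assumes "nontrivial_nonarch_abs N" and "R1 \<noteq> 0" and "R2 \<noteq> 0"
  shows "rank0_critical N t R1 R2 = SS_poles"
  unfolding rank0_critical_def
  using dvanishes_Jfun_iff[OF assms] dvanishes_Hfun_at_poles[OF assms(1)]
  by (auto simp: SS_poles_def)

lemma coords6_SS_poles:
  "coords6 ` SS_poles =
     {(0, 0, 1, 0, 0, 1), (0, 0, -1, 0, 0, 1), (0, 0, 1, 0, 0, -1), (0, 0, -1, 0, 0, -1::'a::field)}"
    (is "_ = ?poles")
proof
  show "coords6 ` SS_poles \<subseteq> ?poles"
    by (auto simp: SS_poles_def SS_def sph1_def sph2_def coords6_def power2_eq_1_iff)
  define pole :: "'a \<Rightarrow> 'a \<Rightarrow> 'a ^ 6" where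
    "pole s1 s2 = (\<chi> i. if i = 2 then s1 else if i = 5 then s2 else 0)" for s1 s2
  have "(0, 0, s1, 0, 0, s2) \<in> coords6 ` SS_poles"
    if "s1 = 1 \<or> s1 = -1" and "s2 = 1 \<or> s2 = -1" for s1 s2 :: 'a
  proof (rule image_eqI)
    show "(0, 0, s1, 0, 0, s2) = coords6 (pole s1 s2)"
      by (simp add: pole_def coords6_def)
    show "pole s1 s2 \<in> SS_poles"
      using that by (auto simp: pole_def SS_poles_def SS_def sph1_def sph2_def)
  qed
  from this[of 1 1] this[of "-1" 1] this[of 1 "-1"] this[of "-1" "-1"]
  show "?poles \<subseteq> coords6 ` SS_poles"
    by simp
qed

theorem proposition2p4:
  fixes p :: nat and N :: "'a::field_char_0 \<Rightarrow> real" and t R1 R2 :: 'a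
  assumes "prime p"
    and "is_Qp p N"
    and "t \<in> Zp N"
    and "0 < N R1" and "N R1 < N R2"
  shows "coords6 ` rank0_critical N t R1 R2 =
           {(0, 0, 1, 0, 0, 1), (0, 0, -1, 0, 0, 1), (0, 0, 1, 0, 0, -1), (0, 0, -1, 0, 0, -1)}"
proof -
  have abs: "nontrivial_nonarch_abs N"
    using is_Qp_nontrivial_nonarch_abs[OF assms(1,2)] .
  then interpret nontrivial_nonarch_abs N .
  have "R1 \<noteq> 0" and "R2 \<noteq> 0"
    using assms(4,5) by auto
  then show ?thesis
    using rank0_critical_eq_SS_poles[OF abs] coords6_SS_poles by simp
qed

end
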